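(* Let $N=((V\cup\{s\},A),\tau)$ be an acyclic pre-flow temporal network and $k\in\mathbb{N}$. Then $\min\{k,\lambda_N(s,v)\}=\min\{k,d^-_A(v)\}$ for every $v\in V$, and there exist $k$ pairwise arc-disjoint $\tau$-respecting $s$-arborescences such that each $v\in V$ belongs to exactly $\min\{k,\lambda_N(s,v)\}$ of them.
   Context: A temporal network is a pair $N=(D,\tau)$ where $D=(V\cup\{s\},A)$ is a directed graph (parallel arcs allowed) with a root $s$ that no arc enters, and $\tau:A\to\mathbb{N}$; it is acyclic if $D$ has no directed cycle. For $i\in\mathbb{N}$, $\rho_N^i(v)=\{a \text{ entering } v:\tau(a)\le i\}$, $\delta_N^i(v)=\{a\text{ leaving } v:\tau(a)\le i\}$. $N$ is pre-flow if $|\rho_N^i(v)|\ge|\delta_N^i(v)|$ for all $i\in\mathbb{N}$ and all $v\in V$. $d^-_A(v)$ is the number of arcs entering $v$. A directed path with arcs $a_1,\dots,a_\ell$ in order is $\tau$-respecting if $\tau(a_1)\le\dots\le\tau(a_\ell)$; $\lambda_N(s,v)$ is the maximum number of pairwise arc-disjoint $\tau$-respecting $(s,v)$-paths. An $s$-arborescence is an acyclic subgraph $F=(V'\cup\{s\},A')$, $V'\subseteq V$, in which each vertex of $V'$ has in-degree exactly $1$; it is $\tau$-respecting if every path in it from $s$ is $\tau$-respecting. *)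

theory Defs
  imports Main
begin

(* Arcs have an abstract type 'e (so parallel arcs are allowed); src/trg give
   tail and head of an arc; vertices have type 'v. *)

definition is_walk :: "('e \<Rightarrow> 'v) \<Rightarrow> ('e \<Rightarrow> 'v) \<Rightarrow> 'e list \<Rightarrow> bool" where
  "is_walk src trg p \<longleftrightarrow> (\<forall>i. Suc i < length p \<longrightarrow> trg (p ! i) = src (p ! Suc i))"

definition is_path :: "('e \<Rightarrow> 'v) \<Rightarrow> ('e \<Rightarrow> 'v) \<Rightarrow> 'e set \<Rightarrow> 'v \<Rightarrow> 'v \<Rightarrow> 'e list \<Rightarrow> bool" where
  "is_path src trg B u w p \<longleftrightarrow>
     p \<noteq> [] \<and> set p \<subseteq> B \<and> is_walk src trg p \<and>
     src (hd p) = u \<and> trg (last p) = w \<and>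
     distinct (map src p @ [trg (last p)])"

definition tau_respecting :: "('e \<Rightarrow> nat) \<Rightarrow> 'e list \<Rightarrow> bool" where
  "tau_respecting \<tau> p \<longleftrightarrow> sorted (map \<tau> p)"

definition acyclic_arcs :: "('e \<Rightarrow> 'v) \<Rightarrow> ('e \<Rightarrow> 'v) \<Rightarrow> 'e set \<Rightarrow> bool" where
  "acyclic_arcs src trg B \<longleftrightarrow>
     \<not> (\<exists>p. p \<noteq> [] \<and> set p \<subseteq> B \<and> is_walk src trg p \<and> src (hd p) = trg (last p))"

(* N = ((V \<union> {s}, A), \<tau>) is a (finite) temporal network with root s that no arc enters *)
definition temporal_network :: "'v set \<Rightarrow> 'v \<Rightarrow> 'e set \<Rightarrow> ('e \<Rightarrow> 'v) \<Rightarrow> ('e \<Rightarrow> 'v) \<Rightarrow> bool" where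
  "temporal_network V s A src trg \<longleftrightarrow>
     finite V \<and> finite A \<and> s \<notin> V \<and>
     (\<forall>a\<in>A. src a \<in> V \<union> {s} \<and> trg a \<in> V)"

definition rho :: "'e set \<Rightarrow> ('e \<Rightarrow> 'v) \<Rightarrow> ('e \<Rightarrow> nat) \<Rightarrow> nat \<Rightarrow> 'v \<Rightarrow> 'e set" where
  "rho A trg \<tau> i v = {a\<in>A. trg a = v \<and> \<tau> a \<le> i}"

definition delta :: "'e set \<Rightarrow> ('e \<Rightarrow> 'v) \<Rightarrow> ('e \<Rightarrow> nat) \<Rightarrow> nat \<Rightarrow> 'v \<Rightarrow> 'e set" where
  "delta A src \<tau> i v = {a\<in>A. src a = v \<and> \<tau> a \<le> i}"

definition pre_flow :: "'v set \<Rightarrow> 'e set \<Rightarrow> ('e \<Rightarrow> 'v) \<Rightarrow> ('e \<Rightarrow> 'v) \<Rightarrow> ('e \<Rightarrow> nat) \<Rightarrow> bool" where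
  "pre_flow V A src trg \<tau> \<longleftrightarrow>
     (\<forall>i. \<forall>v\<in>V. card (rho A trg \<tau> i v) \<ge> card (delta A src \<tau> i v))"

definition in_degree :: "'e set \<Rightarrow> ('e \<Rightarrow> 'v) \<Rightarrow> 'v \<Rightarrow> nat" where
  "in_degree A trg v = card {a\<in>A. trg a = v}"

definition lambda_N :: "'e set \<Rightarrow> ('e \<Rightarrow> 'v) \<Rightarrow> ('e \<Rightarrow> 'v) \<Rightarrow> ('e \<Rightarrow> nat) \<Rightarrow> 'v \<Rightarrow> 'v \<Rightarrow> nat" where
  "lambda_N A src trg \<tau> s v = Max {k. \<exists>P :: nat \<Rightarrow> 'e list.
       (\<forall>i<k. is_path src trg A s v (P i) \<and> tau_respecting \<tau> (P i)) \<and>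
       (\<forall>i<k. \<forall>j<k. i \<noteq> j \<longrightarrow> set (P i) \<inter> set (P j) = {})}"

definition s_arborescence ::
  "'v set \<Rightarrow> 'v \<Rightarrow> 'e set \<Rightarrow> ('e \<Rightarrow> 'v) \<Rightarrow> ('e \<Rightarrow> 'v) \<Rightarrow> 'v set \<Rightarrow> 'e set \<Rightarrow> bool" where
  "s_arborescence V s A src trg V' A' \<longleftrightarrow>
     V' \<subseteq> V \<and> A' \<subseteq> A \<and>
     (\<forall>a\<in>A'. src a \<in> V' \<union> {s} \<and> trg a \<in> V' \<union> {s}) \<and>
     acyclic_arcs src trg A' \<and>
     (\<forall>v\<in>V'. card {a\<in>A'. trg a = v} = 1)"

definition tau_respecting_arb ::
  "'v \<Rightarrow> ('e \<Rightarrow> 'v) \<Rightarrow> ('e \<Rightarrow> 'v) \<Rightarrow> ('e \<Rightarrow> nat) \<Rightarrow> 'v set \<Rightarrow> 'e set \<Rightarrow> bool" where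
  "tau_respecting_arb s src trg \<tau> V' A' \<longleftrightarrow>
     (\<forall>w p. is_path src trg A' s w p \<longrightarrow> tau_respecting \<tau> p)"

end

theory Submission
  imports Defs
begin

text \<open>Induction on the number of vertices. By acyclicity some vertex \<open>v\<close> is entered only by
  arcs from \<open>s\<close>. Merging \<open>v\<close> into \<open>s\<close> keeps the network acyclic and pre-flow, so the smaller
  network has \<open>k\<close> arc-disjoint branchings containing every vertex \<open>w\<close> exactly
  \<open>min k (d\<^sup>-(w))\<close> times. The pre-flow inequalities at \<open>v\<close> are Hall's condition for matching
  every arc leaving \<open>v\<close> to a distinct arc entering \<open>v\<close> that is not later. A branching using arcs
  leaving \<open>v\<close> gets \<open>v\<close> back through the partner of its earliest such arc, and the remaining
  entering arcs add \<open>v\<close> to further branchings until it lies in \<open>min k (d\<^sup>-(v))\<close> of them.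
  Time stamps never decrease along consecutive arcs of a branching, so all its paths are
  \<open>\<tau>\<close>-respecting. The branchings containing \<open>v\<close> thus yield \<open>min k (d\<^sup>-(v))\<close> arc-disjoint
  \<open>\<tau>\<close>-respecting paths to \<open>v\<close>, while arc-disjoint paths to \<open>v\<close> end in distinct entering arcs.\<close>

section \<open>Matching arcs by time thresholds\<close>

lemma threshold_condition_greedy_step:
  fixes f :: "'a \<Rightarrow> nat" and g :: "'b \<Rightarrow> nat"
  assumes "finite S" and "finite Y" and "x \<notin> S" and x_max: "\<forall>x'\<in>S. f x' \<le> f x"
    and count: "\<And>i. card {x'\<in>insert x S. f x' \<le> i} \<le> card {y\<in>Y. g y \<le> i}"
    and y0: "y0 \<in> Y" "g y0 \<le> f x" and y0_max: "\<And>y. y \<in> Y \<Longrightarrow> g y \<le> f x \<Longrightarrow> g y \<le> g y0"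
  shows "card {x'\<in>S. f x' \<le> i} \<le> card {y\<in>Y - {y0}. g y \<le> i}"
proof (cases "i < g y0")
  case True
  then have "{y\<in>Y - {y0}. g y \<le> i} = {y\<in>Y. g y \<le> i}" by auto
  moreover have "card {x'\<in>S. f x' \<le> i} \<le> card {x'\<in>insert x S. f x' \<le> i}"
    using \<open>finite S\<close> by (intro card_mono) auto
  ultimately show ?thesis using count[of i] by simp
next
  case False
  then have "y0 \<in> {y\<in>Y. g y \<le> i}" using y0 by simp
  moreover have "{y\<in>Y - {y0}. g y \<le> i} = {y\<in>Y. g y \<le> i} - {y0}" by auto
  ultimately have drop_y0: "card {y\<in>Y - {y0}. g y \<le> i} = card {y\<in>Y. g y \<le> i} - 1"
    using \<open>finite Y\<close> by (simp add: card_Diff_singleton)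
  show ?thesis
  proof (cases "f x \<le> i")
    case True
    then have "{x'\<in>insert x S. f x' \<le> i} = insert x {x'\<in>S. f x' \<le> i}" by auto
    then have "card {x'\<in>insert x S. f x' \<le> i} = Suc (card {x'\<in>S. f x' \<le> i})"
      using \<open>x \<notin> S\<close> \<open>finite S\<close> by simp
    then show ?thesis using drop_y0 count[of i] by simp
  next
    case False
    have "{x'\<in>insert x S. f x' \<le> f x} = insert x S" using x_max by auto
    then have "Suc (card S) \<le> card {y\<in>Y. g y \<le> f x}"
      using count[of "f x"] \<open>x \<notin> S\<close> \<open>finite S\<close> by simp
    moreover have "{y\<in>Y. g y \<le> f x} \<subseteq> {y\<in>Y. g y \<le> i}" using y0_max \<open>\<not> i < g y0\<close> by fastforce
    then have "card {y\<in>Y. g y \<le> f x} \<le> card {y\<in>Y. g y \<le> i}" using \<open>finite Y\<close> by (intro card_mono) auto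
    moreover have "card {x'\<in>S. f x' \<le> i} \<le> card S" using \<open>finite S\<close> by (intro card_mono) auto
    ultimately show ?thesis using drop_y0 by simp
  qed
qed

lemma threshold_matching:
  fixes f :: "'a \<Rightarrow> nat" and g :: "'b \<Rightarrow> nat"
  assumes "finite X" and "finite Y"
    and "\<And>i. card {x\<in>X. f x \<le> i} \<le> card {y\<in>Y. g y \<le> i}"
  shows "\<exists>\<mu>. inj_on \<mu> X \<and> \<mu> ` X \<subseteq> Y \<and> (\<forall>x\<in>X. g (\<mu> x) \<le> f x)"
  using assms
proof (induction X arbitrary: Y rule: finite_ranking_induct[where f = f])
  case empty
  then show ?case by simp
next
  case (insert x S)
  show ?case
  proof (cases "x \<in> S")
    case True
    with insert show ?thesis by (simp add: insert_absorb)
  next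
    case False
    note finY = insert.prems(1) and count = insert.prems(2)
    have x_max: "\<forall>x'\<in>S. f x' \<le> f x" using insert.hyps(2) by blast
    then have "{x'\<in>insert x S. f x' \<le> f x} = insert x S" by auto
    then have "card (insert x S) \<le> card {y\<in>Y. g y \<le> f x}" using count[of "f x"] by simp
    then have "{y\<in>Y. g y \<le> f x} \<noteq> {}" using insert.hyps(1) False
      by (metis card.empty card_insert_disjoint le_zero_eq nat.distinct(1))
    txt \<open>Greedy choice: match the element of largest rank to the largest admissible partner.\<close>
    then have "Max (g ` {y\<in>Y. g y \<le> f x}) \<in> g ` {y\<in>Y. g y \<le> f x}"
      using finY by (intro Max_in) auto
    then obtain y0 where y0: "y0 \<in> Y" "g y0 \<le> f x" "g y0 = Max (g ` {y\<in>Y. g y \<le> f x})"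
      by auto
    have y0_max: "g y \<le> g y0" if "y \<in> Y" "g y \<le> f x" for y
      unfolding y0(3) using that finY by (intro Max_ge) auto
    have "finite (Y - {y0})" using finY by simp
    then obtain \<mu> where \<mu>: "inj_on \<mu> S" "\<mu> ` S \<subseteq> Y - {y0}" "\<forall>x\<in>S. g (\<mu> x) \<le> f x"
      using insert.IH
        threshold_condition_greedy_step[OF insert.hyps(1) finY False x_max count y0(1,2) y0_max]
      by blast
    have "inj_on (\<mu>(x := y0)) (insert x S)" using \<mu>(1,2) False by (auto simp: inj_on_def)
    moreover have "(\<mu>(x := y0)) ` insert x S \<subseteq> Y" using \<mu>(2) y0(1) False by auto
    moreover have "\<forall>x'\<in>insert x S. g ((\<mu>(x := y0)) x') \<le> f x'" using \<mu>(3) y0(2) False by auto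
    ultimately show ?thesis by blast
  qed
qed

lemma inj_on_extend_to_card:
  assumes g: "inj_on g J" "g ` J \<subseteq> Y" and "finite Y" and "J \<subseteq> I" and "finite I"
  shows "\<exists>D G. J \<subseteq> D \<and> D \<subseteq> I \<and> card D = min (card I) (card Y) \<and>
    inj_on G D \<and> G ` D \<subseteq> Y \<and> (\<forall>j\<in>J. G j = g j)"
proof -
  have "finite J" using \<open>J \<subseteq> I\<close> \<open>finite I\<close> by (rule finite_subset)
  have JY: "card J \<le> card Y" using card_inj_on_le[OF g \<open>finite Y\<close>] .
  have JI: "card J \<le> card I" using \<open>J \<subseteq> I\<close> \<open>finite I\<close> by (rule card_mono[rotated])
  have "min (card I) (card Y) - card J \<le> card (I - J)"
    using \<open>J \<subseteq> I\<close> \<open>finite J\<close> by (simp add: card_Diff_subset)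
  then obtain E where E: "E \<subseteq> I - J" "card E = min (card I) (card Y) - card J" "finite E"
    by (rule obtain_subset_with_card_n)
  have "card (Y - g ` J) = card Y - card J"
    using g \<open>finite J\<close> by (simp add: card_Diff_subset card_image)
  then have "card E \<le> card (Y - g ` J)" using E(2) by simp
  then obtain h where h: "h ` E \<subseteq> Y - g ` J" "inj_on h E"
    using card_le_inj[OF E(3)] \<open>finite Y\<close> by blast
  define G where "G j = (if j \<in> J then g j else h j)" for j
  have "inj_on G J" using g(1) by (auto simp: G_def inj_on_def)
  moreover have "inj_on G E" using h(2) E(1) by (auto simp: G_def inj_on_def)
  moreover have "G ` (J - E) \<inter> G ` (E - J) = {}" using h(1) by (auto simp: G_def)
  ultimately have "inj_on G (J \<union> E)" by (simp add: inj_on_Un)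
  moreover have "card (J \<union> E) = min (card I) (card Y)"
  proof -
    have "J \<inter> E = {}" using E(1) by blast
    then have "card (J \<union> E) = card J + card E" using \<open>finite J\<close> E(3) by (rule card_Un_disjoint[rotated 2])
    then show ?thesis using E(2) JY JI by simp
  qed
  moreover have "G ` (J \<union> E) \<subseteq> Y" using g h E(1) by (auto simp: G_def)
  moreover have "J \<union> E \<subseteq> I" using \<open>J \<subseteq> I\<close> E(1) by blast
  moreover have "\<forall>j\<in>J. G j = g j" by (simp add: G_def)
  ultimately show ?thesis by (intro exI[of _ "J \<union> E"] exI[of _ G]) simp
qed

lemma exists_attaching_arcs:
  fixes \<tau> :: "'e \<Rightarrow> nat" and F :: "nat \<Rightarrow> 'e set"
  assumes "finite In" and "finite Out"
    and thresholds: "\<And>i. card {b\<in>Out. \<tau> b \<le> i} \<le> card {a\<in>In. \<tau> a \<le> i}"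
    and disjoint: "\<And>i j. i < k \<Longrightarrow> j < k \<Longrightarrow> i \<noteq> j \<Longrightarrow> F i \<inter> F j = {}"
  shows "\<exists>D G. D \<subseteq> {..<k} \<and> card D = min k (card In) \<and> inj_on G D \<and> G ` D \<subseteq> In \<and>
    (\<forall>j<k. j \<notin> D \<longrightarrow> Out \<inter> F j = {}) \<and> (\<forall>j\<in>D. \<forall>b\<in>Out \<inter> F j. \<tau> (G j) \<le> \<tau> b)"
proof -
  obtain \<mu> where \<mu>: "inj_on \<mu> Out" "\<mu> ` Out \<subseteq> In" "\<forall>b\<in>Out. \<tau> (\<mu> b) \<le> \<tau> b"
    using threshold_matching[OF \<open>finite Out\<close> \<open>finite In\<close> thresholds] by blast
  define J where "J = {j. j < k \<and> Out \<inter> F j \<noteq> {}}"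
  txt \<open>Each set meeting \<open>Out\<close> receives the partner of its earliest arc in \<open>Out\<close>.\<close>
  define first where "first j = arg_min_on \<tau> (Out \<inter> F j)" for j
  have first: "first j \<in> Out \<inter> F j" "\<forall>b\<in>Out \<inter> F j. \<tau> (first j) \<le> \<tau> b" if "j \<in> J" for j
  proof -
    have fin: "finite (Out \<inter> F j)" and ne: "Out \<inter> F j \<noteq> {}"
      using that \<open>finite Out\<close> unfolding J_def by auto
    show "first j \<in> Out \<inter> F j" "\<forall>b\<in>Out \<inter> F j. \<tau> (first j) \<le> \<tau> b"
      using arg_min_if_finite(1)[OF fin ne] arg_min_least[OF fin ne] unfolding first_def by auto
  qed
  have "inj_on first J"
  proof (rule inj_onI)
    fix i j assume "i \<in> J" "j \<in> J" "first i = first j"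
    then have "first i \<in> F i \<inter> F j" using first(1)[of i] first(1)[of j] by auto
    then show "i = j" using disjoint \<open>i \<in> J\<close> \<open>j \<in> J\<close> unfolding J_def by blast
  qed
  have "first ` J \<subseteq> Out" using first(1) by blast
  then have "inj_on (\<mu> \<circ> first) J"
    using \<open>inj_on first J\<close> \<mu>(1) by (blast intro: comp_inj_on inj_on_subset)
  moreover have "(\<mu> \<circ> first) ` J \<subseteq> In" using \<mu>(2) \<open>first ` J \<subseteq> Out\<close> by auto
  moreover have "J \<subseteq> {..<k}" unfolding J_def by auto
  ultimately obtain D G where D: "J \<subseteq> D" "D \<subseteq> {..<k}" "card D = min k (card In)"
    "inj_on G D" "G ` D \<subseteq> In" "\<forall>j\<in>J. G j = \<mu> (first j)"
    using inj_on_extend_to_card[of "\<mu> \<circ> first" J In "{..<k}"] \<open>finite In\<close> by auto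
  have "\<tau> (G j) \<le> \<tau> b" if "j \<in> D" "b \<in> Out \<inter> F j" for j b
  proof -
    have "j \<in> J" using that D(2) unfolding J_def by blast
    then have "\<tau> (G j) \<le> \<tau> (first j)" using D(6) first(1) \<mu>(3) by auto
    also have "\<dots> \<le> \<tau> b" using first(2) \<open>j \<in> J\<close> that(2) by blast
    finally show ?thesis .
  qed
  moreover have "Out \<inter> F j = {}" if "j < k" "j \<notin> D" for j using that D(1) unfolding J_def by blast
  ultimately show ?thesis using D(2-5) by (intro exI[of _ D] exI[of _ G]) simp
qed

section \<open>Walks in acyclic graphs\<close>

lemma is_walk_take_drop: "is_walk src trg p \<Longrightarrow> is_walk src trg (take n (drop i p))"
  unfolding is_walk_def by (auto simp: nth_take nth_drop add.commute)

lemma is_walk_Cons: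
  "is_walk src trg (a # p) \<longleftrightarrow> (p \<noteq> [] \<longrightarrow> trg a = src (hd p)) \<and> is_walk src trg p"
  unfolding is_walk_def by (cases p) (auto simp: nth_Cons split: nat.splits)

lemma is_walk_snoc:
  assumes "is_walk src trg p" and "p \<noteq> []" and "trg (last p) = src a"
  shows "is_walk src trg (p @ [a])"
  unfolding is_walk_def
proof (intro allI impI)
  fix i assume i: "Suc i < length (p @ [a])"
  show "trg ((p @ [a]) ! i) = src ((p @ [a]) ! Suc i)"
  proof (cases "Suc i < length p")
    case True
    then show ?thesis using assms(1) unfolding is_walk_def by (simp add: nth_append)
  next
    case False
    then have "i = length p - 1" using i by simp
    then show ?thesis using assms(2,3) by (simp add: nth_append last_conv_nth)
  qed
qed

lemma acyclic_arcs_mono: "acyclic_arcs src trg A \<Longrightarrow> B \<subseteq> A \<Longrightarrow> acyclic_arcs src trg B"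
  unfolding acyclic_arcs_def by blast

lemma acyclic_walk_distinct:
  assumes ac: "acyclic_arcs src trg F" and w: "is_walk src trg p" and "p \<noteq> []"
    and "set p \<subseteq> F"
  shows "distinct (map src p @ [trg (last p)])" (is "distinct ?xs")
proof -
  have xs_src: "?xs ! i = src (p ! i)" if "i < length p" for i
    using that by (simp add: nth_append)
  have xs_trg: "?xs ! j = trg (p ! (j - 1))" if "0 < j" "j \<le> length p" for j
  proof (cases "j < length p")
    case True
    then show ?thesis using w that xs_src unfolding is_walk_def by (metis Suc_pred')
  next
    case False
    then show ?thesis using that \<open>p \<noteq> []\<close> by (simp add: nth_append last_conv_nth)
  qed
  have "?xs ! i \<noteq> ?xs ! j" if ij: "i < j" "j \<le> length p" for i j
  proof
    assume eq: "?xs ! i = ?xs ! j"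
    txt \<open>The segment of the walk between positions \<open>i\<close> and \<open>j\<close> would be a closed walk.\<close>
    define q where "q = take (j - i) (drop i p)"
    have "length q = j - i" using ij by (simp add: q_def)
    then have "q \<noteq> []" using ij by auto
    moreover have "set q \<subseteq> F"
      using \<open>set p \<subseteq> F\<close> unfolding q_def by (meson order_trans set_drop_subset set_take_subset)
    moreover have "is_walk src trg q" unfolding q_def using w by (rule is_walk_take_drop)
    moreover have "src (hd q) = ?xs ! i"
      using ij \<open>q \<noteq> []\<close> by (simp add: q_def hd_conv_nth xs_src hd_drop_conv_nth)
    moreover have "trg (last q) = ?xs ! j"
      using ij \<open>q \<noteq> []\<close> \<open>length q = j - i\<close> xs_trg[of j]
      by (simp add: last_conv_nth q_def)
    ultimately show False using ac eq unfolding acyclic_arcs_def by metis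
  qed
  then show ?thesis unfolding distinct_conv_nth by (simp add: nat_neq_iff) (metis less_Suc_eq_le)
qed

lemma acyclic_walk_is_path:
  assumes "acyclic_arcs src trg F" "is_walk src trg p" "p \<noteq> []" "set p \<subseteq> F"
  shows "is_path src trg F (src (hd p)) (trg (last p)) p"
  using acyclic_walk_distinct[OF assms] assms unfolding is_path_def by simp

lemma acyclic_pred_closed_empty:
  assumes "finite W" and ac: "acyclic_arcs src trg F"
    and pred: "\<forall>w\<in>W. \<exists>a\<in>F. trg a = w \<and> src a \<in> W"
  shows "W = {}"
proof (rule ccontr)
  assume "W \<noteq> {}"
  txt \<open>Walking backwards inside \<open>W\<close> yields walks of every length, but walks in an acyclic graph
    visit distinct vertices.\<close>
  have "\<exists>p. length p = Suc n \<and> set p \<subseteq> F \<and> is_walk src trg p \<and> src ` set p \<subseteq> W" for n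
  proof (induction n)
    case 0
    from pred \<open>W \<noteq> {}\<close> obtain a where "a \<in> F" "src a \<in> W" by blast
    then show ?case by (intro exI[of _ "[a]"]) (simp add: is_walk_def)
  next
    case (Suc n)
    then obtain p where p: "length p = Suc n" "set p \<subseteq> F" "is_walk src trg p" "src ` set p \<subseteq> W"
      by blast
    then have "src (hd p) \<in> W" by (cases p) auto
    with pred obtain a where "a \<in> F" "trg a = src (hd p)" "src a \<in> W" by blast
    with p show ?case by (intro exI[of _ "a # p"]) (simp add: is_walk_Cons)
  qed
  then obtain p where p: "length p = Suc (card W)" "set p \<subseteq> F" "is_walk src trg p" "src ` set p \<subseteq> W"
    by blast
  then have "distinct (map src p)" using acyclic_walk_distinct[OF ac p(3) _ p(2)] by fastforce
  then have "card (src ` set p) = Suc (card W)" using p(1) distinct_card by fastforce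
  moreover have "card (src ` set p) \<le> card W" using p(4) \<open>finite W\<close> by (rule card_mono[rotated])
  ultimately show False by simp
qed

lemma acyclic_exists_root_child:
  assumes "temporal_network V s A src trg" and "acyclic_arcs src trg A" and "V \<noteq> {}"
  shows "\<exists>v\<in>V. \<forall>a\<in>A. trg a = v \<longrightarrow> src a = s"
proof -
  have "finite V" and ends: "\<forall>a\<in>A. src a \<in> V \<union> {s}"
    using assms(1) unfolding temporal_network_def by auto
  then have "\<not> (\<forall>w\<in>V. \<exists>a\<in>A. trg a = w \<and> src a \<in> V)"
    using acyclic_pred_closed_empty[OF _ assms(2)] assms(3) by blast
  then show ?thesis using ends by blast
qed

section \<open>Branchings with nondecreasing time stamps\<close>

text \<open>The time condition only compares consecutive arcs, so it survives re-attaching a vertex;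
  acyclicity and reachability from \<open>s\<close> come from the acyclic network.\<close>

definition tau_branching ::
  "'v set \<Rightarrow> 'v \<Rightarrow> 'e set \<Rightarrow> ('e \<Rightarrow> 'v) \<Rightarrow> ('e \<Rightarrow> 'v) \<Rightarrow> ('e \<Rightarrow> nat) \<Rightarrow> 'v set \<Rightarrow> 'e set \<Rightarrow> bool"
  where
  "tau_branching V s A src trg \<tau> V' F \<longleftrightarrow> V' \<subseteq> V \<and> F \<subseteq> A \<and>
     (\<forall>a\<in>F. src a \<in> V' \<union> {s} \<and> trg a \<in> V' \<union> {s}) \<and>
     (\<forall>w\<in>V'. card {a\<in>F. trg a = w} = 1) \<and>
     (\<forall>a\<in>F. \<forall>b\<in>F. trg a = src b \<longrightarrow> \<tau> a \<le> \<tau> b)"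

lemma tau_branching_path_from_root:
  assumes ac: "acyclic_arcs src trg A" and br: "tau_branching V s A src trg \<tau> V' F"
    and "finite V" and "w \<in> V'"
  shows "\<exists>p. is_path src trg F s w p"
proof -
  have acF: "acyclic_arcs src trg F"
    using br acyclic_arcs_mono[OF ac] unfolding tau_branching_def by blast
  define W where "W = {w\<in>V'. \<nexists>p. is_path src trg F s w p}"
  have "finite W" using br \<open>finite V\<close> unfolding W_def tau_branching_def by (auto intro: finite_subset)
  moreover have "\<exists>a\<in>F. trg a = x \<and> src a \<in> W" if x: "x \<in> W" for x
  proof -
    have "card {a\<in>F. trg a = x} = 1" using br x unfolding tau_branching_def W_def by blast
    then obtain a where a: "a \<in> F" "trg a = x" by (metis (mono_tags) card_1_singletonE mem_Collect_eq singletonI)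
    have "src a \<in> W"
    proof (rule ccontr)
      assume "src a \<notin> W"
      txt \<open>Then \<open>a\<close> extends the path to its tail, or is itself a path from the root.\<close>
      moreover have "src a \<in> V' \<union> {s}" using br a unfolding tau_branching_def by blast
      ultimately obtain q where q: "q = [] \<and> src a = s \<or> is_path src trg F s (src a) q"
        unfolding W_def by blast
      have "is_walk src trg (q @ [a])"
        using q by (auto simp: is_path_def is_walk_def[of _ _ "[_]"] intro: is_walk_snoc)
      moreover have "q @ [a] \<noteq> []" "set (q @ [a]) \<subseteq> F" using q a by (auto simp: is_path_def)
      ultimately have "is_path src trg F (src (hd (q @ [a]))) x (q @ [a])"
        using acyclic_walk_is_path[OF acF] a(2) by fastforce
      moreover have "src (hd (q @ [a])) = s" using q unfolding is_path_def by (cases q) auto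
      ultimately show False using x unfolding W_def by auto
    qed
    with a show ?thesis by blast
  qed
  ultimately have "W = {}" using acyclic_pred_closed_empty[OF _ acF] by blast
  then show ?thesis using \<open>w \<in> V'\<close> unfolding W_def by blast
qed

lemma tau_branching_tau_respecting:
  assumes "tau_branching V s A src trg \<tau> V' F" and "is_path src trg F u w p"
  shows "tau_respecting \<tau> p"
  unfolding tau_respecting_def sorted_iff_nth_Suc
proof (intro allI impI)
  fix i assume i: "Suc i < length (map \<tau> p)"
  then have "p ! i \<in> F" "p ! Suc i \<in> F" "trg (p ! i) = src (p ! Suc i)"
    using assms(2) unfolding is_path_def is_walk_def by auto
  then show "map \<tau> p ! i \<le> map \<tau> p ! Suc i" using assms(1) i unfolding tau_branching_def by simp
qed

lemma tau_branching_arborescence: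
  assumes "acyclic_arcs src trg A" and "tau_branching V s A src trg \<tau> V' F"
  shows "s_arborescence V s A src trg V' F \<and> tau_respecting_arb s src trg \<tau> V' F"
proof
  have "F \<subseteq> A" using assms(2) unfolding tau_branching_def by blast
  with assms(1) have "acyclic_arcs src trg F" by (rule acyclic_arcs_mono)
  with assms(2) show "s_arborescence V s A src trg V' F"
    unfolding s_arborescence_def tau_branching_def by (elim conjE) (intro conjI; assumption)
  show "tau_respecting_arb s src trg \<tau> V' F"
    using tau_branching_tau_respecting[OF assms(2)] unfolding tau_respecting_arb_def by blast
qed

section \<open>Merging a vertex into the root\<close>

text \<open>Together with deleting the arcs entering \<open>v\<close>, this merges \<open>v\<close> into the root.\<close>

definition contract_src :: "'v \<Rightarrow> 'v \<Rightarrow> ('e \<Rightarrow> 'v) \<Rightarrow> 'e \<Rightarrow> 'v" where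
  "contract_src s v src b = (if src b = v then s else src b)"

lemma contract_src_eq: "contract_src s v src b \<in> V \<Longrightarrow> s \<notin> V \<Longrightarrow> contract_src s v src b = src b"
  unfolding contract_src_def by (auto split: if_splits)

lemma temporal_network_contract:
  assumes "temporal_network V s A src trg"
  shows "temporal_network (V - {v}) s (A - {a\<in>A. trg a = v}) (contract_src s v src) trg"
  using assms unfolding temporal_network_def contract_src_def by auto

lemma acyclic_arcs_contract:
  assumes tn: "temporal_network V s A src trg" and ac: "acyclic_arcs src trg A"
  shows "acyclic_arcs (contract_src s v src) trg (A - {a\<in>A. trg a = v})"
  unfolding acyclic_arcs_def
proof
  let ?src' = "contract_src s v src"
  have sV: "s \<notin> V" and trgV: "\<forall>a\<in>A. trg a \<in> V" using tn unfolding temporal_network_def by auto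
  assume "\<exists>p. p \<noteq> [] \<and> set p \<subseteq> A - {a\<in>A. trg a = v} \<and> is_walk ?src' trg p \<and> ?src' (hd p) = trg (last p)"
  then obtain p where p: "p \<noteq> []" "set p \<subseteq> A" "is_walk ?src' trg p" "?src' (hd p) = trg (last p)"
    by blast
  txt \<open>A closed walk after contraction is already one before: it never passes through \<open>s\<close>.\<close>
  have "is_walk src trg p" unfolding is_walk_def
  proof (intro allI impI)
    fix i assume i: "Suc i < length p"
    then have "trg (p ! i) = ?src' (p ! Suc i)" using p(3) unfolding is_walk_def by simp
    moreover have "trg (p ! i) \<in> V" using i p(2) trgV by (meson Suc_lessD nth_mem subsetD)
    ultimately show "trg (p ! i) = src (p ! Suc i)" using contract_src_eq sV by metis
  qed
  moreover have "trg (last p) \<in> V" using p(1,2) trgV by (meson last_in_set subsetD)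
  then have "src (hd p) = trg (last p)" using p(4) contract_src_eq sV by metis
  ultimately show False using ac p(1,2) unfolding acyclic_arcs_def by blast
qed

lemma pre_flow_contract:
  assumes tn: "temporal_network V s A src trg" and pf: "pre_flow V A src trg \<tau>"
  shows "pre_flow (V - {v}) (A - {a\<in>A. trg a = v}) (contract_src s v src) trg \<tau>"
  unfolding pre_flow_def
proof (intro allI ballI)
  fix i w assume w: "w \<in> V - {v}"
  have "finite A" "s \<notin> V" using tn unfolding temporal_network_def by auto
  have "rho (A - {a\<in>A. trg a = v}) trg \<tau> i w = rho A trg \<tau> i w" using w unfolding rho_def by auto
  moreover have "delta (A - {a\<in>A. trg a = v}) (contract_src s v src) \<tau> i w \<subseteq> delta A src \<tau> i w"
    using w \<open>s \<notin> V\<close> unfolding delta_def contract_src_def by auto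
  then have "card (delta (A - {a\<in>A. trg a = v}) (contract_src s v src) \<tau> i w) \<le> card (delta A src \<tau> i w)"
    using \<open>finite A\<close> by (intro card_mono) (auto simp: delta_def)
  moreover have "card (delta A src \<tau> i w) \<le> card (rho A trg \<tau> i w)"
    using pf w unfolding pre_flow_def by auto
  ultimately show "card (delta (A - {a\<in>A. trg a = v}) (contract_src s v src) \<tau> i w)
      \<le> card (rho (A - {a\<in>A. trg a = v}) trg \<tau> i w)" by simp
qed

lemma tau_branching_uncontract:
  assumes br: "tau_branching (V - {v}) s (A - {a\<in>A. trg a = v}) (contract_src s v src) trg \<tau> V' F"
    and no_out: "\<forall>b\<in>F. src b \<noteq> v"
  shows "tau_branching V s A src trg \<tau> V' F"
proof -
  have "contract_src s v src b = src b" if "b \<in> F" for b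
    using no_out that unfolding contract_src_def by simp
  with br show ?thesis unfolding tau_branching_def by auto
qed

lemma tau_branching_uncontract_insert:
  assumes br: "tau_branching (V - {v}) s (A - {a\<in>A. trg a = v}) (contract_src s v src) trg \<tau> V' F"
    and tn: "temporal_network V s A src trg" and "v \<in> V"
    and a0: "a0 \<in> A" "trg a0 = v" "src a0 = s"
    and a0_first: "\<forall>b\<in>F. src b = v \<longrightarrow> \<tau> a0 \<le> \<tau> b"
  shows "tau_branching V s A src trg \<tau> (insert v V') (insert a0 F)"
proof -
  have sV: "s \<notin> V" and trgV: "\<forall>a\<in>A. trg a \<in> V" using tn unfolding temporal_network_def by auto
  have V': "V' \<subseteq> V - {v}" and F: "F \<subseteq> A - {a\<in>A. trg a = v}"
    and ends: "\<forall>a\<in>F. contract_src s v src a \<in> V' \<union> {s} \<and> trg a \<in> V' \<union> {s}"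
    and in_one: "\<forall>w\<in>V'. card {a\<in>F. trg a = w} = 1"
    and mono: "\<forall>a\<in>F. \<forall>b\<in>F. trg a = contract_src s v src b \<longrightarrow> \<tau> a \<le> \<tau> b"
    using br unfolding tau_branching_def by auto
  have "src a \<in> insert v V' \<union> {s} \<and> trg a \<in> insert v V' \<union> {s}" if "a \<in> insert a0 F" for a
    using that ends a0 unfolding contract_src_def by (auto split: if_splits)
  moreover have "card {a\<in>insert a0 F. trg a = w} = 1" if "w \<in> insert v V'" for w
  proof (cases "w = v")
    case True
    then have "{a\<in>insert a0 F. trg a = w} = {a0}" using a0 F by auto
    then show ?thesis by simp
  next
    case False
    then have "{a\<in>insert a0 F. trg a = w} = {a\<in>F. trg a = w}" using a0 by auto
    then show ?thesis using in_one False that by simp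
  qed
  moreover have "\<tau> a \<le> \<tau> b" if ab: "a \<in> insert a0 F" "b \<in> insert a0 F" "trg a = src b" for a b
  proof -
    have "trg a \<in> V" using ab(1) a0 F trgV by auto
    then have "b \<in> F" using ab sV a0(3) by auto
    show ?thesis
    proof (cases "a = a0")
      case True
      then show ?thesis using a0_first \<open>b \<in> F\<close> ab(3) a0(2) by auto
    next
      case False
      then have "a \<in> F" "trg a \<noteq> v" using ab(1) F by auto
      then show ?thesis using mono \<open>b \<in> F\<close> ab(3) unfolding contract_src_def by auto
    qed
  qed
  ultimately show ?thesis unfolding tau_branching_def using V' F \<open>v \<in> V\<close> a0 by auto
qed

lemma pre_flow_out_in_thresholds:
  assumes "pre_flow V A src trg \<tau>" and "v \<in> V"
  shows "card {b\<in>{b\<in>A. src b = v}. \<tau> b \<le> i} \<le> card {a\<in>{a\<in>A. trg a = v}. \<tau> a \<le> i}"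
proof -
  have "{b\<in>{b\<in>A. src b = v}. \<tau> b \<le> i} = delta A src \<tau> i v"
    and "{a\<in>{a\<in>A. trg a = v}. \<tau> a \<le> i} = rho A trg \<tau> i v"
    unfolding delta_def rho_def by auto
  then show ?thesis using assms unfolding pre_flow_def by simp
qed

lemma tau_branchings_reattach:
  fixes k :: nat
  assumes tn: "temporal_network V s A src trg" and pf: "pre_flow V A src trg \<tau>" and "v \<in> V"
    and in_root: "\<forall>a\<in>A. trg a = v \<longrightarrow> src a = s"
    and br': "\<forall>i<k. tau_branching (V - {v}) s (A - {a\<in>A. trg a = v}) (contract_src s v src) trg \<tau>
      (Vs' i) (As' i)"
    and disj': "\<forall>i<k. \<forall>j<k. i \<noteq> j \<longrightarrow> As' i \<inter> As' j = {}"
    and count': "\<forall>w\<in>V - {v}. card {i. i < k \<and> w \<in> Vs' i} = min k (in_degree (A - {a\<in>A. trg a = v}) trg w)"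
  shows "\<exists>Vs As. (\<forall>i<k. tau_branching V s A src trg \<tau> (Vs i) (As i)) \<and>
     (\<forall>i<k. \<forall>j<k. i \<noteq> j \<longrightarrow> As i \<inter> As j = {}) \<and>
     (\<forall>w\<in>V. card {i. i < k \<and> w \<in> Vs i} = min k (in_degree A trg w))"
proof -
  define In where "In = {a\<in>A. trg a = v}"
  define Out where "Out = {b\<in>A. src b = v}"
  have "finite A" using tn unfolding temporal_network_def by simp
  then obtain D G where D: "D \<subseteq> {..<k}" "card D = min k (card In)" "inj_on G D" "G ` D \<subseteq> In"
    and unused: "\<forall>j<k. j \<notin> D \<longrightarrow> Out \<inter> As' j = {}"
    and first: "\<forall>j\<in>D. \<forall>b\<in>Out \<inter> As' j. \<tau> (G j) \<le> \<tau> b"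
    using exists_attaching_arcs[of In Out \<tau> k As'] pre_flow_out_in_thresholds[OF pf \<open>v \<in> V\<close>] disj'
    unfolding In_def Out_def by auto
  define Vs where "Vs j = (if j \<in> D then insert v (Vs' j) else Vs' j)" for j
  define As where "As j = (if j \<in> D then insert (G j) (As' j) else As' j)" for j
  have As': "As' j \<subseteq> A - In" "Vs' j \<subseteq> V - {v}" if "j < k" for j
    using br' that unfolding tau_branching_def In_def by auto
  have "tau_branching V s A src trg \<tau> (Vs j) (As j)" if "j < k" for j
  proof (cases "j \<in> D")
    case True
    then have "G j \<in> A" "trg (G j) = v" "src (G j) = s" using D(4) in_root unfolding In_def by auto
    moreover have "\<forall>b\<in>As' j. src b = v \<longrightarrow> \<tau> (G j) \<le> \<tau> b"
      using first True As'(1)[OF that] unfolding Out_def by auto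
    ultimately show ?thesis
      using tau_branching_uncontract_insert[OF br'[rule_format, OF that] tn \<open>v \<in> V\<close>] True
      unfolding Vs_def As_def by simp
  next
    case False
    then have "\<forall>b\<in>As' j. src b \<noteq> v" using unused that As'(1)[OF that] unfolding Out_def by auto
    then show ?thesis using tau_branching_uncontract br'[rule_format, OF that] False
      unfolding Vs_def As_def by simp
  qed
  moreover have "As i \<inter> As j = {}" if "i < k" "j < k" "i \<noteq> j" for i j
    using disj' that As'(1)[OF that(1)] As'(1)[OF that(2)] D(4) inj_onD[OF D(3)]
    unfolding As_def by (auto split: if_splits)
  moreover have "card {i. i < k \<and> w \<in> Vs i} = min k (in_degree A trg w)" if "w \<in> V" for w
  proof (cases "w = v")
    case True
    then have "{i. i < k \<and> w \<in> Vs i} = D" using D(1) As'(2) unfolding Vs_def by auto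
    then show ?thesis using D(2) True unfolding in_degree_def In_def by simp
  next
    case False
    then have "{i. i < k \<and> w \<in> Vs i} = {i. i < k \<and> w \<in> Vs' i}" unfolding Vs_def by auto
    moreover have "in_degree (A - {a\<in>A. trg a = v}) trg w = in_degree A trg w"
      unfolding in_degree_def using False by (intro arg_cong[where f = card]) auto
    ultimately show ?thesis using count' False \<open>w \<in> V\<close> by simp
  qed
  ultimately show ?thesis by blast
qed

lemma tau_branchings_exist:
  fixes k :: nat
  assumes "temporal_network V s A src trg" and "acyclic_arcs src trg A" and "pre_flow V A src trg \<tau>"
  shows "\<exists>Vs As. (\<forall>i<k. tau_branching V s A src trg \<tau> (Vs i) (As i)) \<and>
     (\<forall>i<k. \<forall>j<k. i \<noteq> j \<longrightarrow> As i \<inter> As j = {}) \<and>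
     (\<forall>v\<in>V. card {i. i < k \<and> v \<in> Vs i} = min k (in_degree A trg v))"
  using assms
proof (induction "card V" arbitrary: V A src)
  case 0
  then have "V = {}" and "A = {}" unfolding temporal_network_def by auto
  then show ?case by (intro exI[of _ "\<lambda>_. {}"]) (simp add: tau_branching_def)
next
  case (Suc n)
  note tn = Suc.prems(1)
  obtain v where "v \<in> V" and in_root: "\<forall>a\<in>A. trg a = v \<longrightarrow> src a = s"
    using acyclic_exists_root_child[OF tn Suc.prems(2)] Suc.hyps(2) by fastforce
  moreover have "n = card (V - {v})"
    using Suc.hyps(2) \<open>v \<in> V\<close> tn unfolding temporal_network_def by simp
  then obtain Vs' As' where
    "\<forall>i<k. tau_branching (V - {v}) s (A - {a\<in>A. trg a = v}) (contract_src s v src) trg \<tau> (Vs' i) (As' i)"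
    "\<forall>i<k. \<forall>j<k. i \<noteq> j \<longrightarrow> As' i \<inter> As' j = {}"
    "\<forall>w\<in>V - {v}. card {i. i < k \<and> w \<in> Vs' i} = min k (in_degree (A - {a\<in>A. trg a = v}) trg w)"
    using Suc.hyps(1)[OF _ temporal_network_contract[OF tn] acyclic_arcs_contract[OF tn Suc.prems(2)]
        pre_flow_contract[OF tn Suc.prems(3)]] by blast
  then show ?case using tau_branchings_reattach[OF tn Suc.prems(3) \<open>v \<in> V\<close> in_root] by blast
qed

section \<open>Arc-disjoint \<open>\<tau>\<close>-respecting paths\<close>

lemma is_path_mono: "is_path src trg B u w p \<Longrightarrow> B \<subseteq> C \<Longrightarrow> is_path src trg C u w p"
  unfolding is_path_def by blast

lemma path_packing_le_in_degree:
  assumes "finite A"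
    and P: "\<forall>i<m. is_path src trg A u v (P i)"
    and disj: "\<forall>i<m. \<forall>j<m. i \<noteq> j \<longrightarrow> set (P i) \<inter> set (P j) = {}"
  shows "m \<le> in_degree A trg v"
proof -
  txt \<open>Distinct paths end with distinct arcs entering \<open>v\<close>.\<close>
  have last_in: "last (P i) \<in> set (P i) \<inter> {a\<in>A. trg a = v}" if "i < m" for i
    using P that last_in_set unfolding is_path_def by fastforce
  have "inj_on (\<lambda>i. last (P i)) {..<m}"
    using last_in disj by (intro inj_onI) (metis IntD1 disjoint_iff lessThan_iff)
  moreover have "(\<lambda>i. last (P i)) ` {..<m} \<subseteq> {a\<in>A. trg a = v}" using last_in by blast
  ultimately have "card {..<m} \<le> card {a\<in>A. trg a = v}"
    using \<open>finite A\<close> by (intro card_inj_on_le) auto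
  then show ?thesis unfolding in_degree_def by simp
qed

definition path_packing_sizes ::
  "'e set \<Rightarrow> ('e \<Rightarrow> 'v) \<Rightarrow> ('e \<Rightarrow> 'v) \<Rightarrow> ('e \<Rightarrow> nat) \<Rightarrow> 'v \<Rightarrow> 'v \<Rightarrow> nat set" where
  "path_packing_sizes A src trg \<tau> s v = {m. \<exists>P :: nat \<Rightarrow> 'e list.
     (\<forall>i<m. is_path src trg A s v (P i) \<and> tau_respecting \<tau> (P i)) \<and>
     (\<forall>i<m. \<forall>j<m. i \<noteq> j \<longrightarrow> set (P i) \<inter> set (P j) = {})}"

lemma lambda_N_eq_Max: "lambda_N A src trg \<tau> s v = Max (path_packing_sizes A src trg \<tau> s v)"
  unfolding lambda_N_def path_packing_sizes_def ..

lemma path_packing_sizes_le_in_degree: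
  assumes "finite A"
  shows "path_packing_sizes A src trg \<tau> s v \<subseteq> {..in_degree A trg v}"
proof
  fix m assume "m \<in> path_packing_sizes A src trg \<tau> s v"
  then obtain P where "\<forall>i<m. is_path src trg A s v (P i)"
    and "\<forall>i<m. \<forall>j<m. i \<noteq> j \<longrightarrow> set (P i) \<inter> set (P j) = {}"
    unfolding path_packing_sizes_def by blast
  then show "m \<in> {..in_degree A trg v}" using path_packing_le_in_degree[OF assms] by simp
qed

lemma path_packing_le_lambda_N:
  assumes "finite A" and "m \<in> path_packing_sizes A src trg \<tau> s v"
  shows "m \<le> lambda_N A src trg \<tau> s v"
proof -
  have "finite (path_packing_sizes A src trg \<tau> s v)"
    using path_packing_sizes_le_in_degree[OF assms(1)] by (rule finite_subset) simp
  then show ?thesis unfolding lambda_N_eq_Max using assms(2) by (rule Max_ge)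
qed

lemma lambda_N_le_in_degree:
  assumes "finite A"
  shows "lambda_N A src trg \<tau> s v \<le> in_degree A trg v"
proof -
  have bound: "path_packing_sizes A src trg \<tau> s v \<subseteq> {..in_degree A trg v}"
    using assms by (rule path_packing_sizes_le_in_degree)
  moreover have "0 \<in> path_packing_sizes A src trg \<tau> s v" unfolding path_packing_sizes_def by simp
  ultimately show ?thesis
    unfolding lambda_N_eq_Max by (subst Max_le_iff) (auto intro: finite_subset[OF bound])
qed

lemma tau_branchings_le_lambda_N:
  fixes k :: nat
  assumes tn: "temporal_network V s A src trg" and ac: "acyclic_arcs src trg A"
    and br: "\<forall>i<k. tau_branching V s A src trg \<tau> (Vs i) (As i)"
    and disj: "\<forall>i<k. \<forall>j<k. i \<noteq> j \<longrightarrow> As i \<inter> As j = {}"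
  shows "card {i. i < k \<and> v \<in> Vs i} \<le> lambda_N A src trg \<tau> s v"
proof -
  let ?S = "{i. i < k \<and> v \<in> Vs i}"
  have "finite V" "finite A" using tn unfolding temporal_network_def by auto
  have "finite ?S" by simp
  then obtain f where f: "bij_betw f {0..<card ?S} ?S" by (blast dest: ex_bij_betw_nat_finite)
  txt \<open>Each branching containing \<open>v\<close> carries a path from the root to \<open>v\<close>.\<close>
  define P where "P i = (SOME p. is_path src trg (As (f i)) s v p)" for i
  have P: "is_path src trg (As (f i)) s v (P i)" "f i < k" if "i < card ?S" for i
  proof -
    have "f i \<in> ?S" using f that by (auto dest: bij_betwE)
    then show "is_path src trg (As (f i)) s v (P i)"
      using tau_branching_path_from_root[OF ac _ \<open>finite V\<close>] br unfolding P_def by (blast intro: someI_ex)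
    show "f i < k" using \<open>f i \<in> ?S\<close> by simp
  qed
  have "card ?S \<in> path_packing_sizes A src trg \<tau> s v"
    unfolding path_packing_sizes_def
  proof (intro CollectI exI[of _ P] conjI)
    show "\<forall>i<card ?S. is_path src trg A s v (P i) \<and> tau_respecting \<tau> (P i)"
    proof (intro allI impI conjI)
      fix i assume "i < card ?S"
      with P br have "is_path src trg (As (f i)) s v (P i)"
        and "tau_branching V s A src trg \<tau> (Vs (f i)) (As (f i))" by auto
      then show "is_path src trg A s v (P i)" "tau_respecting \<tau> (P i)"
        by (auto simp: tau_branching_def intro: is_path_mono tau_branching_tau_respecting)
    qed
    show "\<forall>i<card ?S. \<forall>j<card ?S. i \<noteq> j \<longrightarrow> set (P i) \<inter> set (P j) = {}"
    proof (intro allI impI)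
      fix i j assume ij: "i < card ?S" "j < card ?S" "i \<noteq> j"
      then have "f i \<noteq> f j" using f by (auto simp: bij_betw_def inj_on_def)
      then have "As (f i) \<inter> As (f j) = {}" using disj P ij by blast
      moreover have "set (P i) \<subseteq> As (f i)" "set (P j) \<subseteq> As (f j)"
        using P ij unfolding is_path_def by auto
      ultimately show "set (P i) \<inter> set (P j) = {}" by blast
    qed
  qed
  then show ?thesis by (rule path_packing_le_lambda_N[OF \<open>finite A\<close>])
qed

theorem mainTheorem2:
  fixes V :: "'v set" and s :: 'v and A :: "'e set"
    and src trg :: "'e \<Rightarrow> 'v" and \<tau> :: "'e \<Rightarrow> nat" and k :: nat
  assumes "temporal_network V s A src trg"
    and "acyclic_arcs src trg A"
    and "pre_flow V A src trg \<tau>"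
  shows "(\<forall>v\<in>V. min k (lambda_N A src trg \<tau> s v) = min k (in_degree A trg v)) \<and>
         (\<exists>Vs :: nat \<Rightarrow> 'v set. \<exists>As :: nat \<Rightarrow> 'e set.
            (\<forall>i<k. s_arborescence V s A src trg (Vs i) (As i) \<and>
                   tau_respecting_arb s src trg \<tau> (Vs i) (As i)) \<and>
            (\<forall>i<k. \<forall>j<k. i \<noteq> j \<longrightarrow> As i \<inter> As j = {}) \<and>
            (\<forall>v\<in>V. card {i. i < k \<and> v \<in> Vs i} = min k (lambda_N A src trg \<tau> s v)))"
proof -
  obtain Vs As where br: "\<forall>i<k. tau_branching V s A src trg \<tau> (Vs i) (As i)"
    and disj: "\<forall>i<k. \<forall>j<k. i \<noteq> j \<longrightarrow> As i \<inter> As j = {}"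
    and count: "\<forall>v\<in>V. card {i. i < k \<and> v \<in> Vs i} = min k (in_degree A trg v)"
    using tau_branchings_exist[OF assms, where k = k] by blast
  have "finite A" using assms(1) unfolding temporal_network_def by simp
  have lambda: "min k (lambda_N A src trg \<tau> s v) = min k (in_degree A trg v)" if "v \<in> V" for v
  proof -
    have "min k (in_degree A trg v) \<le> lambda_N A src trg \<tau> s v"
      using tau_branchings_le_lambda_N[OF assms(1,2) br disj] count that by metis
    moreover have "lambda_N A src trg \<tau> s v \<le> in_degree A trg v"
      using \<open>finite A\<close> by (rule lambda_N_le_in_degree)
    ultimately show ?thesis by linarith
  qed
  show ?thesis
  proof (intro conjI exI[of _ Vs] exI[of _ As])
    show "\<forall>v\<in>V. min k (lambda_N A src trg \<tau> s v) = min k (in_degree A trg v)" using lambda by blast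
    show "\<forall>i<k. s_arborescence V s A src trg (Vs i) (As i) \<and> tau_respecting_arb s src trg \<tau> (Vs i) (As i)"
      using br tau_branching_arborescence[OF assms(2)] by blast
    show "\<forall>i<k. \<forall>j<k. i \<noteq> j \<longrightarrow> As i \<inter> As j = {}" by (rule disj)
    show "\<forall>v\<in>V. card {i. i < k \<and> v \<in> Vs i} = min k (lambda_N A src trg \<tau> s v)"
      using count lambda by simp
  qed
qed

end
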